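(* Let $\eta\in\mathcal O_N$ and let $p^B_i(\eta)$, $p^D_i(\eta)$ denote the probabilities that an explorer attaches to column $i$ in configuration $\eta$ under ballistic, respectively diffusive, deposition. Then for every $k=1,\dots,N$, $$\sum_{i=1}^k p^B_i(\eta)\ge\sum_{i=1}^k\frac{\eta_i+1}{|\eta|+N}\quad\text{and}\quad\sum_{i=1}^k p^D_i(\eta)\ge\sum_{i=1}^k\frac{\eta_i+1}{|\eta|+N}.$$
   Context: Deposition models: for $N\ge2$, $G_N=\{1,\dots,N\}$, a configuration $\eta\in\mathbb N^N$ gives column heights, $|\eta|=\sum_i\eta_i$. Given $\eta$, an explorer is a walk $(X_n,Z_n)_{n\ge0}$ with $(X_n)$ i.i.d. uniform on $G_N$, $Z_0=\max_i\eta_i+1$, and increments $Z_{n+1}-Z_n$ i.i.d. uniform on $\{-1,1\}$ independent of $(X_n)$ (diffusive deposition) or identically $-1$ (ballistic deposition); with $n^*=\inf\{n:Z_n\le\eta_{X_n}\}$, the explorer attaches to column $X_{n^*}$. $\mathcal O_N$ is the set of $\eta\in\mathbb N^N$ with $\eta_1\ge\dots\ge\eta_N$. *)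

theory Defs
  imports "HOL-Probability.Probability"
begin

text \<open>A configuration is eta :: nat => nat, relevant on the columns {1..N}.
  A sample point omega :: nat => nat \<times> int gives at time n the pair
  (X_n, Z_(n+1) - Z_n); all coordinates are i.i.d. with law
  (uniform on {1..N}) \<times> S, where S is the increment law.\<close>

definition explorer_space :: "nat \<Rightarrow> int pmf \<Rightarrow> (nat \<Rightarrow> nat \<times> int) measure" where
  "explorer_space N S = PiM UNIV (\<lambda>_. measure_pmf (pair_pmf (pmf_of_set {1..N}) S))"

definition max_height :: "nat \<Rightarrow> (nat \<Rightarrow> nat) \<Rightarrow> nat" where
  "max_height N eta = Max (eta ` {1..N})"

definition config_size :: "nat \<Rightarrow> (nat \<Rightarrow> nat) \<Rightarrow> nat" where
  "config_size N eta = (\<Sum>i=1..N. eta i)"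

definition expl_height :: "nat \<Rightarrow> (nat \<Rightarrow> nat) \<Rightarrow> (nat \<Rightarrow> nat \<times> int) \<Rightarrow> nat \<Rightarrow> int" where
  "expl_height N eta \<omega> n = int (max_height N eta) + 1 + (\<Sum>m<n. snd (\<omega> m))"

definition expl_stops :: "nat \<Rightarrow> (nat \<Rightarrow> nat) \<Rightarrow> (nat \<Rightarrow> nat \<times> int) \<Rightarrow> nat \<Rightarrow> bool" where
  "expl_stops N eta \<omega> n \<longleftrightarrow> expl_height N eta \<omega> n \<le> int (eta (fst (\<omega> n)))"

definition attach_prob :: "int pmf \<Rightarrow> nat \<Rightarrow> (nat \<Rightarrow> nat) \<Rightarrow> nat \<Rightarrow> real" where
  "attach_prob S N eta i = measure (explorer_space N S)
     {\<omega> \<in> space (explorer_space N S). \<exists>n. expl_stops N eta \<omega> n \<and>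
        (\<forall>m<n. \<not> expl_stops N eta \<omega> m) \<and> fst (\<omega> n) = i}"

definition ballistic_step :: "int pmf" where
  "ballistic_step = return_pmf (-1)"

definition diffusive_step :: "int pmf" where
  "diffusive_step = pmf_of_set {-1, 1}"

definition pB :: "nat \<Rightarrow> (nat \<Rightarrow> nat) \<Rightarrow> nat \<Rightarrow> real" where
  "pB = attach_prob ballistic_step"

definition pD :: "nat \<Rightarrow> (nat \<Rightarrow> nat) \<Rightarrow> nat \<Rightarrow> real" where
  "pD = attach_prob diffusive_step"

definition ordered_config :: "nat \<Rightarrow> (nat \<Rightarrow> nat) \<Rightarrow> bool" where
  "ordered_config N eta \<longleftrightarrow> (\<forall>i j. 1 \<le> i \<longrightarrow> i \<le> j \<longrightarrow> j \<le> N \<longrightarrow> eta j \<le> eta i)"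

end

theory Submission
  imports Defs
begin

text \<open>
  Start the explorer at z0 = max eta + 1 and let visits h be the expected number of times the walk
  is at level h before it attaches. From level h it attaches at the next step with probability
  #{i. h \<le> eta i} / N, so the probability of attaching to a set K of columns is
  (1/N) * (\<Sum>h. visits h * #{i \<in> K. h \<le> eta i}).
  A last-step decomposition shows that visits is nondecreasing on 0..max eta, because up-steps
  have probability at most 1/2, and since the explorer attaches almost surely these weights sum
  to 1 for K = {1..N}. For a non-increasing configuration the proportion
  #{i \<le> k. h \<le> eta i} / #{i. h \<le> eta i} is nondecreasing in h, so by a Chebyshev-type sum
  inequality the weights visits h can only increase the share of the first k columns over the
  share obtained with constant weights, which is (\<Sum>i\<le>k. eta i + 1) / (|eta| + N).
\<close>

fun attaches_in :: "(nat \<Rightarrow> nat) \<Rightarrow> nat set \<Rightarrow> int \<Rightarrow> (nat \<times> int) list \<Rightarrow> bool" where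
  "attaches_in eta K z [] = False"
| "attaches_in eta K z (x # xs) =
     (if z \<le> int (eta (fst x)) then fst x \<in> K else attaches_in eta K (z + snd x) xs)"

text \<open>A path s carries at time m the pair (X_m, Z_(m+1) - Z_m), so the left-hand side below is the
  height Z_n of the explorer started at Z_0 = z.\<close>
definition stops_at :: "(nat \<Rightarrow> nat) \<Rightarrow> int \<Rightarrow> (nat \<times> int) stream \<Rightarrow> nat \<Rightarrow> bool" where
  "stops_at eta z s n \<longleftrightarrow> z + (\<Sum>m<n. snd (s !! m)) \<le> int (eta (fst (s !! n)))"

definition first_stop :: "(nat \<Rightarrow> nat) \<Rightarrow> int \<Rightarrow> (nat \<times> int) stream \<Rightarrow> nat \<Rightarrow> bool" where
  "first_stop eta z s n \<longleftrightarrow> stops_at eta z s n \<and> (\<forall>m<n. \<not> stops_at eta z s m)"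

lemma stops_at_0: "stops_at eta z s 0 \<longleftrightarrow> z \<le> int (eta (fst (shd s)))"
  by (simp add: stops_at_def)

lemma stops_at_Suc: "stops_at eta z s (Suc n) \<longleftrightarrow> stops_at eta (z + snd (shd s)) (stl s) n"
  unfolding stops_at_def sum.lessThan_Suc_shift by (simp add: add.assoc)

lemma first_stop_0: "first_stop eta z s 0 \<longleftrightarrow> stops_at eta z s 0"
  by (simp add: first_stop_def)

lemma first_stop_Suc:
  "first_stop eta z s (Suc n) \<longleftrightarrow> \<not> stops_at eta z s 0 \<and> first_stop eta (z + snd (shd s)) (stl s) n"
  by (auto simp: first_stop_def stops_at_Suc less_Suc_eq_0_disj)

lemma first_stop_unique: "first_stop eta z s m \<Longrightarrow> first_stop eta z s n \<Longrightarrow> m = n"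
  unfolding first_stop_def by (metis linorder_neqE_nat)

lemma attaches_in_stake_iff:
  "attaches_in eta K z (stake T s) \<longleftrightarrow> (\<exists>n<T. first_stop eta z s n \<and> fst (s !! n) \<in> K)"
proof (induction T arbitrary: z s)
  case 0
  show ?case by simp
next
  case (Suc T)
  show ?case
  proof (cases "stops_at eta z s 0")
    case True
    then have "first_stop eta z s n \<longleftrightarrow> n = 0" for n
      using first_stop_unique first_stop_0 by blast
    with True show ?thesis by (auto simp: stops_at_0)
  next
    case False
    then show ?thesis
      using Suc.IH by (simp add: Ex_less_Suc2 first_stop_Suc first_stop_0 stops_at_0)
  qed
qed

lemma monotone_likelihood_ratio_sum_le:
  fixes G a c :: "'a::linorder \<Rightarrow> real"
  assumes "finite H"
    and G_mono: "\<And>h h'. h \<in> H \<Longrightarrow> h' \<in> H \<Longrightarrow> h' \<le> h \<Longrightarrow> G h' \<le> G h"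
    and ratio_mono: "\<And>h h'. h \<in> H \<Longrightarrow> h' \<in> H \<Longrightarrow> h' \<le> h \<Longrightarrow> a h' * c h \<le> a h * c h'"
  shows "(\<Sum>h\<in>H. a h) * (\<Sum>h\<in>H. G h * c h) \<le> (\<Sum>h\<in>H. c h) * (\<Sum>h\<in>H. G h * a h)"
proof -
  define t where "t h h' = G h * (a h * c h' - a h' * c h)" for h h'
  have pair_nonneg: "0 \<le> t h h' + t h' h" if "h \<in> H" "h' \<in> H" for h h'
  proof -
    have "0 \<le> (G h - G h') * (a h * c h' - a h' * c h)"
    proof (cases "h' \<le> h")
      case True
      then show ?thesis using G_mono[OF that True] ratio_mono[OF that True] by simp
    next
      case False
      then have "h \<le> h'" by simp
      then show ?thesis using G_mono[OF that(2,1)] ratio_mono[OF that(2,1)]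
        by (simp add: mult_nonpos_nonpos)
    qed
    moreover have "t h h' + t h' h = (G h - G h') * (a h * c h' - a h' * c h)"
      by (simp add: t_def algebra_simps)
    ultimately show ?thesis by simp
  qed
  have swap: "(\<Sum>h\<in>H. \<Sum>h'\<in>H. t h' h) = (\<Sum>h\<in>H. \<Sum>h'\<in>H. t h h')"
    by (rule sum.swap)
  have "0 \<le> (\<Sum>h\<in>H. \<Sum>h'\<in>H. t h h' + t h' h)"
    using pair_nonneg by (intro sum_nonneg) auto
  also have "\<dots> = 2 * (\<Sum>h\<in>H. \<Sum>h'\<in>H. t h h')"
    using swap by (simp add: sum.distrib)
  also have "(\<Sum>h\<in>H. \<Sum>h'\<in>H. t h h')
      = (\<Sum>h\<in>H. c h) * (\<Sum>h\<in>H. G h * a h) - (\<Sum>h\<in>H. a h) * (\<Sum>h\<in>H. G h * c h)"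
  proof -
    have "(\<Sum>h\<in>H. c h) * (\<Sum>h\<in>H. G h * a h) = (\<Sum>h\<in>H. \<Sum>h'\<in>H. G h * a h * c h')"
      "(\<Sum>h\<in>H. a h) * (\<Sum>h\<in>H. G h * c h) = (\<Sum>h\<in>H. \<Sum>h'\<in>H. G h * c h * a h')"
      by (subst mult.commute, simp add: sum_product)+
    then show ?thesis
      by (simp add: t_def sum_subtractf[symmetric] algebra_simps)
  qed
  finally show ?thesis by simp
qed

lemma sum_card_ge_eq:
  fixes f :: "'a \<Rightarrow> nat"
  assumes "finite K" and "\<And>i. i \<in> K \<Longrightarrow> f i \<le> M"
  shows "(\<Sum>h\<in>{0..int M}. card {i\<in>K. h \<le> int (f i)}) = (\<Sum>i\<in>K. f i + 1)"
proof -
  have levels: "{h\<in>{0..int M}. h \<le> int (f i)} = {0..int (f i)}" if "i \<in> K" for i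
    using assms(2)[OF that] by auto
  have "(\<Sum>h\<in>{0..int M}. card {i\<in>K. h \<le> int (f i)})
      = (\<Sum>i\<in>K. card {h\<in>{0..int M}. h \<le> int (f i)})"
    using \<open>finite K\<close> sum.swap[where g="\<lambda>h i. of_bool (h \<le> int (f i)) :: nat" and A="{0..int M}" and B=K]
    by (simp add: Int_def conj_commute)
  also have "\<dots> = (\<Sum>i\<in>K. f i + 1)"
    by (rule sum.cong[OF refl]) (subst levels, simp_all)
  finally show ?thesis .
qed

lemma bounded_harmonic_seq_flat:
  fixes v :: "nat \<Rightarrow> real"
  assumes harmonic: "\<And>n. v (Suc n) = p * v (Suc (Suc n)) + (1 - p) * v n"
    and p: "0 \<le> p" "p \<le> 1/2"
    and bounded: "\<And>n. \<bar>v n\<bar> \<le> B"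
  shows "v 1 = v 0"
proof (cases "p = 0")
  case True
  then show ?thesis using harmonic[of 0] by simp
next
  case False
  then have "0 < p" using p by simp
  define d where "d = v 1 - v 0"
  text \<open>The increments satisfy p * (v (n + 2) - v (n + 1)) = (1 - p) * (v (n + 1) - v n) with
    p \<le> 1 - p, so they keep the sign of the first one and never shrink.\<close>
  have increment_ge: "d * d \<le> d * (v (Suc n) - v n)" for n
  proof (induction n)
    case 0
    show ?case by (simp add: d_def)
  next
    case (Suc n)
    have "p * (v (Suc (Suc n)) - v (Suc n)) = (1 - p) * (v (Suc n) - v n)"
      using harmonic[of n] by (simp add: algebra_simps)
    then have "p * (d * (v (Suc (Suc n)) - v (Suc n))) = (1 - p) * (d * (v (Suc n) - v n))"
      by (metis mult.left_commute)
    moreover have "p * (d * (v (Suc n) - v n)) \<le> (1 - p) * (d * (v (Suc n) - v n))"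
      using Suc.IH p(2) by (intro mult_right_mono) (auto intro: order_trans[OF zero_le_square])
    ultimately have "p * (d * (v (Suc n) - v n)) \<le> p * (d * (v (Suc (Suc n)) - v (Suc n)))"
      by linarith
    then have "d * (v (Suc n) - v n) \<le> d * (v (Suc (Suc n)) - v (Suc n))"
      using \<open>0 < p\<close> by (rule mult_left_le_imp_le)
    with Suc.IH show ?case by linarith
  qed
  have drift: "real n * (d * d) \<le> d * (v n - v 0)" for n
  proof (induction n)
    case 0
    show ?case by simp
  next
    case (Suc n)
    with increment_ge[of n] show ?case by (simp add: algebra_simps)
  qed
  show ?thesis
  proof (rule ccontr)
    assume "v 1 \<noteq> v 0"
    then have "d \<noteq> 0" by (simp add: d_def)
    then have "0 < d * d" by (metis power2_eq_square zero_less_power2)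
    then obtain n where n: "\<bar>d\<bar> * (2 * B) < real n * (d * d)"
      using ex_less_of_nat_mult by blast
    have "d * (v n - v 0) \<le> \<bar>d\<bar> * \<bar>v n - v 0\<bar>"
      by (metis abs_ge_self abs_mult)
    also have "\<dots> \<le> \<bar>d\<bar> * (2 * B)"
      using bounded[of n] bounded[of 0] by (intro mult_left_mono) auto
    finally show False using drift[of n] n by linarith
  qed
qed

section \<open>The explorer as a random walk killed at the columns\<close>

definition step_pmf :: "nat \<Rightarrow> int pmf \<Rightarrow> (nat \<times> int) pmf" where
  "step_pmf N S = pair_pmf (pmf_of_set {1..N}) S"

lemma stake_pred_sets:
  fixes p :: "'a::countable pmf"
  shows "{s \<in> space (stream_space (measure_pmf p)). P (stake T s)} \<in> sets (stream_space (measure_pmf p))"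
proof -
  have sets_eq: "sets (stream_space (measure_pmf p)) = sets (stream_space (count_space UNIV))"
    by (rule sets_stream_space_cong) simp
  have "stake T \<in> measurable (stream_space (measure_pmf p)) (count_space UNIV)"
    unfolding measurable_cong_sets[OF sets_eq refl] by (rule measurable_stake)
  then have "stake T -` {xs. P xs} \<inter> space (stream_space (measure_pmf p)) \<in> sets (stream_space (measure_pmf p))"
    by (rule measurable_sets) simp
  moreover have "{s \<in> space (stream_space (measure_pmf p)). P (stake T s)}
      = stake T -` {xs. P xs} \<inter> space (stream_space (measure_pmf p))"
    by auto
  ultimately show ?thesis
    by simp
qed

lemma snth_to_stream [simp]: "to_stream X !! n = X n"
  by (simp add: to_stream_def)

text \<open>S is the law of the vertical increments; ballistic deposition has pmf S 1 = 0 and diffusive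
  deposition pmf S 1 = 1/2.\<close>
locale explorer =
  fixes N :: nat and eta :: "nat \<Rightarrow> nat" and S :: "int pmf"
  assumes N_pos: "0 < N"
    and step_support: "set_pmf S \<subseteq> {-1, 1}"
    and up_le_half: "pmf S 1 \<le> 1/2"
begin

abbreviation paths :: "(nat \<times> int) stream measure" where
  "paths \<equiv> stream_space (measure_pmf (step_pmf N S))"

abbreviation up :: real where
  "up \<equiv> pmf S 1"

lemma prob_space_paths: "prob_space paths"
  by (rule prob_space.prob_space_stream_space[OF prob_space_measure_pmf])

lemma pmf_down: "pmf S (-1) = 1 - up"
  using sum_pmf_eq_1[of "{-1, 1}" S] step_support by simp

lemma up_nonneg: "0 \<le> up" and up_lt_1: "up < 1"
  using up_le_half by auto

lemma nn_integral_step: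
  assumes G_nonneg: "\<And>t. 0 \<le> G t"
  shows "(\<integral>\<^sup>+t. ennreal (G t) \<partial>step_pmf N S)
    = ennreal ((\<Sum>i=1..N. up * G (i, 1) + (1 - up) * G (i, -1)) / N)"
proof -
  let ?A = "{1..N} \<times> {-1, 1 :: int}"
  have "set_pmf (step_pmf N S) \<subseteq> ?A"
    using step_support N_pos by (auto simp: step_pmf_def)
  then have "(\<integral>\<^sup>+t. ennreal (G t) \<partial>step_pmf N S) = (\<Sum>t\<in>?A. ennreal (G t) * pmf (step_pmf N S) t)"
    by (intro nn_integral_measure_pmf_support) auto
  also have "\<dots> = ennreal (\<Sum>t\<in>?A. G t * pmf (step_pmf N S) t)"
    using G_nonneg by (subst sum_ennreal[symmetric]) (simp_all add: ennreal_mult'')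
  also have "(\<Sum>t\<in>?A. G t * pmf (step_pmf N S) t)
      = (\<Sum>i=1..N. \<Sum>\<xi>\<in>{-1, 1}. G (i, \<xi>) * (pmf S \<xi> / N))"
    unfolding sum.cartesian_product by (intro sum.cong) (auto simp: step_pmf_def pmf_pair)
  also have "\<dots> = (\<Sum>i=1..N. up * G (i, 1) + (1 - up) * G (i, -1)) / N"
    unfolding sum_divide_distrib by (intro sum.cong) (simp_all add: pmf_down field_simps)
  finally show ?thesis .
qed

definition hit_prob :: "nat set \<Rightarrow> nat \<Rightarrow> int \<Rightarrow> real" where
  "hit_prob K T z = measure paths {s \<in> space paths. attaches_in eta K z (stake T s)}"

definition n_ge :: "nat set \<Rightarrow> int \<Rightarrow> nat" where
  "n_ge K z = card {i \<in> K. z \<le> int (eta i)}"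

definition pass_prob :: "int \<Rightarrow> real" where
  "pass_prob z = 1 - n_ge {1..N} z / N"

lemma hit_prob_nonneg: "0 \<le> hit_prob K T z"
  by (simp add: hit_prob_def)

lemma hit_prob_le_1: "hit_prob K T z \<le> 1"
  unfolding hit_prob_def by (rule prob_space.prob_le_1[OF prob_space_paths])

lemma n_ge_le: "K \<subseteq> {1..N} \<Longrightarrow> n_ge K z \<le> N"
  unfolding n_ge_def using card_mono[of "{1..N}" "{i \<in> K. z \<le> int (eta i)}"] by auto

lemma pass_prob_nonneg: "0 \<le> pass_prob z" and pass_prob_le_1: "pass_prob z \<le> 1"
  using n_ge_le[of "{1..N}" z] N_pos by (simp_all add: pass_prob_def field_simps)

lemma sum_columns_split:
  assumes "K \<subseteq> {1..N}"
  shows "(\<Sum>i=1..N. if z \<le> int (eta i) then of_bool (i \<in> K) else Y)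
    = real (n_ge K z) + (N - real (n_ge {1..N} z)) * Y"
proof -
  let ?P = "{i. z \<le> int (eta i)}"
  have "(\<Sum>i\<in>{1..N} \<inter> ?P. of_bool (i \<in> K) :: real) = card ({1..N} \<inter> ?P \<inter> {i. i \<in> K})"
    by (rule sum_of_bool_eq) (auto intro: finite_subset[OF Int_lower1])
  also have "{1..N} \<inter> ?P \<inter> {i. i \<in> K} = {i \<in> K. z \<le> int (eta i)}"
    using assms by auto
  finally have stopping: "(\<Sum>i\<in>{1..N} \<inter> ?P. of_bool (i \<in> K) :: real) = n_ge K z"
    by (simp add: n_ge_def)
  have "card ({1..N} \<inter> - ?P) = card ({1..N} - {i \<in> {1..N}. z \<le> int (eta i)})"
    by (intro arg_cong[where f=card]) auto
  also have "\<dots> = card {1..N} - card {i \<in> {1..N}. z \<le> int (eta i)}"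
    by (rule card_Diff_subset) auto
  also have "\<dots> = N - n_ge {1..N} z"
    by (simp add: n_ge_def)
  finally have passing: "real (card ({1..N} \<inter> - ?P)) = N - real (n_ge {1..N} z)"
    using n_ge_le[of "{1..N}" z] by simp
  show ?thesis
    by (subst sum.If_cases) (simp_all only: finite_atLeastAtMost stopping sum_constant passing)
qed

lemma hit_prob_Suc:
  assumes "K \<subseteq> {1..N}"
  shows "hit_prob K (Suc T) z
    = n_ge K z / N + pass_prob z * (up * hit_prob K T (z + 1) + (1 - up) * hit_prob K T (z - 1))"
proof -
  define Y where "Y = up * hit_prob K T (z + 1) + (1 - up) * hit_prob K T (z - 1)"
  define G where "G t = (if z \<le> int (eta (fst t)) then of_bool (fst t \<in> K) else hit_prob K T (z + snd t))"
    for t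
  have G_nonneg: "0 \<le> G t" for t
    by (simp add: G_def hit_prob_nonneg)
  define R where "R = (\<Sum>i=1..N. up * G (i, 1) + (1 - up) * G (i, -1)) / N"
  have R_nonneg: "0 \<le> R"
    unfolding R_def using G_nonneg up_nonneg up_lt_1
    by (intro divide_nonneg_nonneg sum_nonneg add_nonneg_nonneg mult_nonneg_nonneg) auto
  have G_prob: "\<P>(s in paths. attaches_in eta K z (stake (Suc T) (t ## s))) = G t" for t
  proof (cases "z \<le> int (eta (fst t))")
    case True
    then show ?thesis
      using prob_space.prob_space[OF prob_space_paths] by (cases "fst t \<in> K") (simp_all add: G_def)
  next
    case False
    then show ?thesis by (simp add: G_def hit_prob_def)
  qed
  have "ennreal (hit_prob K (Suc T) z)
      = (\<integral>\<^sup>+t. \<P>(s in paths. attaches_in eta K z (stake (Suc T) (t ## s))) \<partial>step_pmf N S)"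
    unfolding hit_prob_def by (rule prob_space.prob_stream_space[OF prob_space_measure_pmf stake_pred_sets])
  also have "\<dots> = (\<integral>\<^sup>+t. ennreal (G t) \<partial>step_pmf N S)"
    by (simp only: G_prob)
  also have "\<dots> = ennreal R"
    unfolding R_def using G_nonneg by (rule nn_integral_step)
  finally have "hit_prob K (Suc T) z = R"
    by (rule ennreal_inj[THEN iffD1, OF hit_prob_nonneg R_nonneg])
  also have "R = (\<Sum>i=1..N. if z \<le> int (eta i) then of_bool (i \<in> K) else Y) / N"
    unfolding R_def Y_def by (intro arg_cong[where f="\<lambda>x. x / N"] sum.cong) (auto simp: G_def algebra_simps)
  also have "\<dots> = n_ge K z / N + (1 - n_ge {1..N} z / N) * Y"
    using N_pos unfolding sum_columns_split[OF assms] by (simp add: field_simps)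
  finally show ?thesis
    by (simp add: pass_prob_def Y_def)
qed

section \<open>The Green function of the killed walk\<close>

abbreviation hmax :: nat where
  "hmax \<equiv> max_height N eta"

lemma eta_le_hmax: "i \<in> {1..N} \<Longrightarrow> eta i \<le> hmax"
  unfolding max_height_def by (rule Max_ge) auto

lemma hmax_attained: "\<exists>i\<in>{1..N}. eta i = hmax"
proof -
  have "hmax \<in> eta ` {1..N}"
    unfolding max_height_def using N_pos by (intro Max_in) auto
  then show ?thesis by auto
qed

lemma n_ge_above_hmax:
  assumes "K \<subseteq> {1..N}" and "int hmax < z"
  shows "n_ge K z = 0"
proof -
  have "{i \<in> K. z \<le> int (eta i)} = {}"
    using assms eta_le_hmax by force
  then show ?thesis unfolding n_ge_def by (simp only: card.empty)
qed

lemma n_ge_nonpos: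
  assumes "z \<le> 0"
  shows "n_ge {1..N} z = N"
proof -
  have "{i \<in> {1..N}. z \<le> int (eta i)} = {1..N}"
    using assms by auto
  then show ?thesis unfolding n_ge_def by (simp only: card_atLeastAtMost)
qed

lemma n_ge_pos: "z \<le> int hmax \<Longrightarrow> 0 < n_ge {1..N} z"
  unfolding n_ge_def using hmax_attained by (auto simp: card_gt_0_iff)

lemma pass_prob_nonpos: "z \<le> 0 \<Longrightarrow> pass_prob z = 0"
  unfolding pass_prob_def using N_pos n_ge_nonpos by simp

lemma pass_prob_above_hmax: "int hmax < z \<Longrightarrow> pass_prob z = 1"
  by (simp add: pass_prob_def n_ge_above_hmax)

lemma pass_prob_le_hmax: "z \<le> int hmax \<Longrightarrow> pass_prob z \<le> 1 - 1 / N"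
  using n_ge_pos[of z] by (simp add: pass_prob_def divide_right_mono)

text \<open>The expected number of visits to level h during the first T steps of the walk started at z
  and killed when it attaches.\<close>
primrec green :: "nat \<Rightarrow> int \<Rightarrow> int \<Rightarrow> real" where
  "green 0 h z = 0"
| "green (Suc T) h z =
     of_bool (z = h) + pass_prob z * (up * green T h (z + 1) + (1 - up) * green T h (z - 1))"

lemma green_nonneg: "0 \<le> green T h z"
  by (induction T arbitrary: z)
    (auto intro!: add_nonneg_nonneg mult_nonneg_nonneg pass_prob_nonneg simp: up_lt_1 less_imp_le)

lemma green_le_Suc: "green T h z \<le> green (Suc T) h z"
proof (induction T arbitrary: z)
  case 0
  show ?case by (simp add: green_nonneg)
next
  case (Suc T)
  have "up * green T h (z + 1) + (1 - up) * green T h (z - 1)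
      \<le> up * green (Suc T) h (z + 1) + (1 - up) * green (Suc T) h (z - 1)"
    using up_lt_1 by (intro add_mono mult_left_mono Suc.IH) auto
  then show ?case
    using mult_left_mono[OF _ pass_prob_nonneg] by (simp only: green.simps) simp
qed

lemma green_last_step:
  "green (Suc T) h z = of_bool (z = h)
     + up * pass_prob (h - 1) * green T (h - 1) z + (1 - up) * pass_prob (h + 1) * green T (h + 1) z"
proof (induction T arbitrary: z h)
  case 0
  show ?case by simp
next
  case (Suc T)
  have shift: "pass_prob z * of_bool (z + 1 = h) = pass_prob (h - 1) * of_bool (z = h - 1)"
    "pass_prob z * of_bool (z - 1 = h) = pass_prob (h + 1) * of_bool (z = h + 1)"
    by auto
  have "green (Suc (Suc T)) h z - (of_bool (z = h)
      + up * pass_prob (h - 1) * green (Suc T) (h - 1) z + (1 - up) * pass_prob (h + 1) * green (Suc T) (h + 1) z)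
    = up * (pass_prob z * of_bool (z + 1 = h) - pass_prob (h - 1) * of_bool (z = h - 1))
      + (1 - up) * (pass_prob z * of_bool (z - 1 = h) - pass_prob (h + 1) * of_bool (z = h + 1))"
    unfolding green.simps(2)[of "Suc T" h z] Suc.IH[where z="z + 1" and h=h] Suc.IH[where z="z - 1" and h=h]
      green.simps(2)[of T "h - 1" z] green.simps(2)[of T "h + 1" z]
    by (simp add: algebra_simps)
  also have "\<dots> = 0"
    unfolding shift by (simp only: diff_self mult_zero_right add_0_right)
  finally show ?case
    by (rule right_minus_eq[THEN iffD1])
qed

lemma green_below_0: "h < 0 \<Longrightarrow> 0 \<le> z \<Longrightarrow> green T h z = 0"
proof (induction T arbitrary: z)
  case 0
  show ?case by simp
next
  case (Suc T)
  then show ?case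
    by (cases "z = 0") (simp_all add: pass_prob_nonpos)
qed

lemma hit_prob_eq_green:
  assumes K: "K \<subseteq> {1..N}"
  shows "0 \<le> z \<Longrightarrow> hit_prob K T z = (\<Sum>h=0..int hmax. green T h z * n_ge K h) / N"
proof (induction T arbitrary: z)
  case 0
  show ?case by (simp add: hit_prob_def)
next
  case (Suc T)
  define X where "X z' = (\<Sum>h=0..int hmax. green T h z' * n_ge K h) / N" for z'
  have start: "(\<Sum>h=0..int hmax. of_bool (z = h) * real (n_ge K h)) = n_ge K z"
    using Suc.prems n_ge_above_hmax[OF K, of z] by (cases "z \<le> int hmax") auto
  have up_IH: "hit_prob K T (z + 1) = X (z + 1)"
    using Suc by (simp add: X_def)
  have down_IH: "pass_prob z * hit_prob K T (z - 1) = pass_prob z * X (z - 1)"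
    using Suc pass_prob_nonpos[of 0] by (cases "z = 0") (simp_all add: X_def)
  have pointwise: "green (Suc T) h z * n_ge K h = of_bool (z = h) * real (n_ge K h)
      + pass_prob z * up * (green T h (z + 1) * n_ge K h)
      + pass_prob z * (1 - up) * (green T h (z - 1) * n_ge K h)" for h
    by (simp add: algebra_simps)
  have "(\<Sum>h=0..int hmax. green (Suc T) h z * n_ge K h)
      = (\<Sum>h=0..int hmax. of_bool (z = h) * real (n_ge K h))
        + pass_prob z * up * (\<Sum>h=0..int hmax. green T h (z + 1) * n_ge K h)
        + pass_prob z * (1 - up) * (\<Sum>h=0..int hmax. green T h (z - 1) * n_ge K h)"
    unfolding pointwise sum.distrib sum_distrib_left by (rule refl)
  also have "\<dots> = N * (n_ge K z / N + pass_prob z * (up * X (z + 1) + (1 - up) * X (z - 1)))"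
    unfolding start X_def using N_pos by (simp add: field_simps)
  finally have green_Suc: "(\<Sum>h=0..int hmax. green (Suc T) h z * n_ge K h) / N
      = n_ge K z / N + pass_prob z * (up * X (z + 1) + (1 - up) * X (z - 1))"
    using N_pos by simp
  have "pass_prob z * ((1 - up) * hit_prob K T (z - 1)) = pass_prob z * ((1 - up) * X (z - 1))"
    using down_IH by (simp only: mult.left_commute[of "pass_prob z"])
  then show ?case
    unfolding hit_prob_Suc[OF K] up_IH green_Suc distrib_left by (simp only:)
qed

abbreviation z0 :: int where
  "z0 \<equiv> int hmax + 1"

lemma green_le_N:
  assumes "h \<in> {0..int hmax}"
  shows "green T h z0 \<le> N"
proof -
  have "green T h z0 \<le> green T h z0 * n_ge {1..N} h"
    using n_ge_pos[of h] assms green_nonneg[of T h z0] by (simp add: mult_le_cancel_left1)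
  also have "\<dots> \<le> (\<Sum>h'=0..int hmax. green T h' z0 * n_ge {1..N} h')"
    using assms by (intro member_le_sum) (auto intro!: mult_nonneg_nonneg green_nonneg)
  also have "\<dots> = N * hit_prob {1..N} T z0"
    using hit_prob_eq_green[of "{1..N}" z0 T] N_pos by simp
  also have "\<dots> \<le> N"
    using hit_prob_le_1 by (simp add: mult_left_le)
  finally show ?thesis .
qed

lemma green_le_2N:
  assumes "h \<in> {-1..z0}"
  shows "green T h z0 \<le> 2 * N"
proof -
  consider "h = -1" | "h \<in> {0..int hmax}" | "h = z0"
    using assms by force
  then show ?thesis
  proof cases
    case 1
    then show ?thesis by (simp add: green_below_0)
  next
    case 2
    then show ?thesis using green_le_N[of h T] by simp
  next
    case 3
    text \<open>Every visit to z0 is followed, with probability 1 - up \<ge> 1/2, by a visit to hmax.\<close>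
    have "(1 - up) * green T z0 z0 \<le> green (Suc T) (int hmax) z0"
      unfolding green_last_step
      using green_nonneg[of T "int hmax - 1" z0] pass_prob_nonneg[of "int hmax - 1"] up_nonneg
      by (simp add: pass_prob_above_hmax del: green.simps)
    also have "\<dots> \<le> N"
      by (rule green_le_N) simp
    finally have "green T z0 z0 - up * green T z0 z0 \<le> N"
      by (simp add: algebra_simps)
    moreover have "up * green T z0 z0 \<le> 1/2 * green T z0 z0"
      using up_le_half green_nonneg by (rule mult_right_mono)
    ultimately show ?thesis
      using 3 by simp
  qed
qed

definition visits :: "int \<Rightarrow> real" where
  "visits h = lim (\<lambda>T. green T h z0)"

lemma green_tendsto_visits:
  assumes "h \<in> {-1..z0}"
  shows "(\<lambda>T. green T h z0) \<longlonglongrightarrow> visits h"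
proof -
  have "incseq (\<lambda>T. green T h z0)"
    by (rule incseq_SucI) (rule green_le_Suc)
  moreover have "bdd_above (range (\<lambda>T. green T h z0))"
    using green_le_2N[OF assms] by (intro bdd_aboveI) auto
  ultimately show ?thesis
    unfolding visits_def using LIMSEQ_incseq_SUP convergentI convergent_LIMSEQ_iff by blast
qed

lemma visits_nonneg: "h \<in> {-1..z0} \<Longrightarrow> 0 \<le> visits h"
  by (rule LIMSEQ_le_const[OF green_tendsto_visits]) (auto intro: green_nonneg)

lemma visits_below_0: "visits (-1) = 0"
proof -
  have "(\<lambda>T. green T (-1) z0) = (\<lambda>T. 0)"
    using green_below_0 by auto
  moreover have "(\<lambda>T. green T (-1) z0) \<longlonglongrightarrow> visits (-1)"
    by (rule green_tendsto_visits) simp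
  ultimately have "(\<lambda>T. 0) \<longlonglongrightarrow> visits (-1)"
    by simp
  then show ?thesis
    by (simp add: LIMSEQ_const_iff)
qed

lemma visits_balance:
  assumes "h \<in> {0..int hmax}"
  shows "visits h = up * pass_prob (h - 1) * visits (h - 1) + (1 - up) * pass_prob (h + 1) * visits (h + 1)"
proof -
  have levels: "h \<in> {-1..z0}" "h - 1 \<in> {-1..z0}" "h + 1 \<in> {-1..z0}"
    using assms by auto
  have "(\<lambda>T. green (Suc T) h z0) \<longlonglongrightarrow> visits h"
    using green_tendsto_visits[OF levels(1)] by (rule LIMSEQ_Suc)
  moreover have "(\<lambda>T. green (Suc T) h z0) \<longlonglongrightarrow>
      up * pass_prob (h - 1) * visits (h - 1) + (1 - up) * pass_prob (h + 1) * visits (h + 1)"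
    unfolding green_last_step using assms
    by (simp, intro tendsto_intros green_tendsto_visits levels)
  ultimately show ?thesis using LIMSEQ_unique by blast
qed

lemma visits_step_mono: "n \<le> hmax + 1 \<Longrightarrow> visits (int n - 1) \<le> visits (int n)"
proof (induction n)
  case 0
  show ?case using visits_below_0 visits_nonneg[of 0] by simp
next
  case (Suc n)
  define h where "h = int n"
  have h: "h \<in> {0..int hmax}"
    using Suc.prems by (simp add: h_def)
  have IH: "visits (h - 1) \<le> visits h"
    using Suc by (simp add: h_def)
  have nonneg: "0 \<le> visits (h - 1)" "0 \<le> visits h" "0 \<le> visits (h + 1)"
    using h by (auto intro!: visits_nonneg)
  have "visits h = up * pass_prob (h - 1) * visits (h - 1) + (1 - up) * pass_prob (h + 1) * visits (h + 1)"
    by (rule visits_balance[OF h])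
  also have "\<dots> \<le> up * visits h + (1 - up) * visits (h + 1)"
  proof (intro add_mono)
    have "pass_prob (h - 1) * visits (h - 1) \<le> 1 * visits h"
      using IH nonneg pass_prob_le_1 pass_prob_nonneg by (intro mult_mono) auto
    then show "up * pass_prob (h - 1) * visits (h - 1) \<le> up * visits h"
      using up_nonneg by (simp add: mult.assoc mult_left_mono)
    have "pass_prob (h + 1) * visits (h + 1) \<le> 1 * visits (h + 1)"
      using nonneg pass_prob_le_1 by (intro mult_right_mono) auto
    then show "(1 - up) * pass_prob (h + 1) * visits (h + 1) \<le> (1 - up) * visits (h + 1)"
      using up_lt_1 by (simp add: mult.assoc mult_left_mono)
  qed
  finally have "(1 - up) * visits h \<le> (1 - up) * visits (h + 1)"
    by (simp add: algebra_simps)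
  then show ?case
    using up_lt_1 by (simp add: h_def add.commute)
qed

lemma visits_mono:
  assumes "0 \<le> h" "h \<le> h'" "h' \<le> int hmax"
  shows "visits h \<le> visits h'"
proof -
  have "visits h \<le> visits (h + int d)" if "h + int d \<le> int hmax" for d
    using that
  proof (induction d)
    case 0
    show ?case by simp
  next
    case (Suc d)
    then have "visits (h + int d) \<le> visits (h + int d + 1)"
      using visits_step_mono[of "nat (h + int d + 1)"] assms(1) by simp
    with Suc show ?case by (simp add: ac_simps)
  qed
  moreover obtain d where "h' = h + int d"
    using assms(2) zle_iff_zadd by blast
  ultimately show ?thesis
    using assms(3) by simp
qed

section \<open>Almost sure attachment\<close>

definition attach_event :: "nat set \<Rightarrow> int \<Rightarrow> (nat \<times> int) stream set" where
  "attach_event K z = {s \<in> space paths. \<exists>n. first_stop eta z s n \<and> fst (s !! n) \<in> K}"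

lemma attach_event_eq_UN:
  "attach_event K z = (\<Union>T. {s \<in> space paths. attaches_in eta K z (stake T s)})"
  unfolding attach_event_def attaches_in_stake_iff using lessI by blast

lemma attach_event_sets: "attach_event K z \<in> sets paths"
  unfolding attach_event_eq_UN using stake_pred_sets by (intro sets.countable_nat_UN) auto

lemma hit_prob_tendsto_attach: "(\<lambda>T. hit_prob K T z) \<longlonglongrightarrow> measure paths (attach_event K z)"
proof -
  interpret P: prob_space paths
    by (rule prob_space_paths)
  define A where "A T = {s \<in> space paths. attaches_in eta K z (stake T s)}" for T
  have "incseq A"
  proof (rule incseq_SucI)
    show "A T \<subseteq> A (Suc T)" for T
      unfolding A_def attaches_in_stake_iff using less_SucI by blast
  qed
  moreover have "range A \<subseteq> sets paths"
    using stake_pred_sets by (auto simp: A_def)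
  ultimately have "(\<lambda>T. measure paths (A T)) \<longlonglongrightarrow> measure paths (\<Union>T. A T)"
    by (rule P.finite_Lim_measure_incseq[rotated])
  then show ?thesis
    unfolding attach_event_eq_UN hit_prob_def A_def .
qed

lemma attach_event_prob:
  assumes "K \<subseteq> {1..N}"
  shows "measure paths (attach_event K z0) = (\<Sum>h=0..int hmax. visits h * n_ge K h) / N"
proof -
  have "(\<lambda>T. hit_prob K T z0) \<longlonglongrightarrow> (\<Sum>h=0..int hmax. visits h * n_ge K h) / N"
    unfolding hit_prob_eq_green[OF assms, of z0, simplified]
    using N_pos by (intro tendsto_intros green_tendsto_visits) auto
  with hit_prob_tendsto_attach show ?thesis
    using LIMSEQ_unique by blast
qed

definition escape_prob :: "int \<Rightarrow> real" where
  "escape_prob z = 1 - measure paths (attach_event {1..N} z)"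

lemma escape_prob_nonneg: "0 \<le> escape_prob z" and escape_prob_le_1: "escape_prob z \<le> 1"
  using prob_space.prob_le_1[OF prob_space_paths] by (simp_all add: escape_prob_def)

lemma escape_prob_balance:
  "escape_prob z = pass_prob z * (up * escape_prob (z + 1) + (1 - up) * escape_prob (z - 1))"
proof -
  let ?m = "\<lambda>z. measure paths (attach_event {1..N} z)"
  have "(\<lambda>T. hit_prob {1..N} (Suc T) z) \<longlonglongrightarrow> ?m z"
    using hit_prob_tendsto_attach by (rule LIMSEQ_Suc)
  moreover have "(\<lambda>T. hit_prob {1..N} (Suc T) z)
      \<longlonglongrightarrow> (1 - pass_prob z) + pass_prob z * (up * ?m (z + 1) + (1 - up) * ?m (z - 1))"
    unfolding hit_prob_Suc[OF order_refl]
    by (intro tendsto_intros hit_prob_tendsto_attach) (simp add: pass_prob_def)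
  ultimately have "?m z = (1 - pass_prob z) + pass_prob z * (up * ?m (z + 1) + (1 - up) * ?m (z - 1))"
    using LIMSEQ_unique by blast
  then show ?thesis
    by (simp add: escape_prob_def algebra_simps)
qed

text \<open>Above all columns the walk is free, so escape_prob is a bounded harmonic function there.\<close>
lemma escape_prob_z0_eq_hmax: "escape_prob z0 = escape_prob (int hmax)"
proof -
  define v where "v n = escape_prob (int hmax + int n)" for n
  have harmonic: "v (Suc n) = up * v (Suc (Suc n)) + (1 - up) * v n" for n
    using escape_prob_balance[of "int hmax + int (Suc n)"]
    by (simp add: v_def pass_prob_above_hmax algebra_simps)
  have bounded: "\<bar>v n\<bar> \<le> 1" for n
    using escape_prob_nonneg escape_prob_le_1 by (simp add: v_def)
  have "v 1 = v 0"
    using harmonic up_nonneg up_le_half bounded by (rule bounded_harmonic_seq_flat)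
  then show ?thesis
    by (simp add: v_def)
qed

lemma escape_prob_le_Max:
  assumes "z \<in> {0..z0}"
  shows "escape_prob z \<le> Max (escape_prob ` {0..int hmax})"
proof -
  have "escape_prob z = escape_prob (min z (int hmax))"
    using assms escape_prob_z0_eq_hmax by (cases "z = z0") auto
  also have "\<dots> \<le> Max (escape_prob ` {0..int hmax})"
    using assms by (intro Max_ge) auto
  finally show ?thesis .
qed

lemma escape_prob_z0_eq_0: "escape_prob z0 = 0"
proof -
  define m where "m = Max (escape_prob ` {0..int hmax})"
  have "m \<in> escape_prob ` {0..int hmax}"
    unfolding m_def by (rule Max_in) auto
  then obtain z1 where z1: "z1 \<in> {0..int hmax}" "escape_prob z1 = m"
    by blast
  text \<open>At a maximiser the balance equation forces m \<le> (1 - 1/N) m.\<close>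
  have "m = 0"
  proof (cases "z1 = 0")
    case True
    then show ?thesis
      using z1 escape_prob_balance[of 0] pass_prob_nonpos[of 0] by simp
  next
    case False
    then have neighbours: "z1 - 1 \<in> {0..z0}" "z1 + 1 \<in> {0..z0}"
      using z1 by auto
    have "escape_prob z1 \<le> pass_prob z1 * (up * m + (1 - up) * m)"
      unfolding escape_prob_balance[of z1] m_def
      using escape_prob_le_Max[OF neighbours(1)] escape_prob_le_Max[OF neighbours(2)]
        up_nonneg up_lt_1 pass_prob_nonneg[of z1]
      by (intro mult_left_mono add_mono) auto
    then have "m \<le> pass_prob z1 * m"
      using z1(2) by (simp add: algebra_simps)
    also have "\<dots> \<le> (1 - 1 / N) * m"
      using pass_prob_le_hmax[of z1] z1 escape_prob_nonneg[of z1] by (intro mult_right_mono) auto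
    finally have "m / N \<le> 0"
      by (simp add: algebra_simps)
    then show ?thesis
      using z1 escape_prob_nonneg[of z1] N_pos by (simp add: divide_le_0_iff)
  qed
  then show ?thesis
    using escape_prob_le_Max[of z0] escape_prob_nonneg[of z0] by (simp add: m_def)
qed

lemma visits_total: "(\<Sum>h=0..int hmax. visits h * n_ge {1..N} h) = N"
  using attach_event_prob[of "{1..N}"] escape_prob_z0_eq_0 N_pos by (simp add: escape_prob_def)

lemma attach_prob_eq_attach_event: "attach_prob S N eta i = measure paths (attach_event {i} z0)"
proof -
  let ?P = "explorer_space N S"
  have P: "?P = (\<Pi>\<^sub>M n\<in>UNIV. measure_pmf (step_pmf N S))"
    by (simp add: explorer_space_def step_pmf_def)
  have stops: "expl_stops N eta \<omega> n \<longleftrightarrow> stops_at eta z0 (to_stream \<omega>) n" for \<omega> n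
    by (simp add: expl_stops_def stops_at_def expl_height_def)
  have "{\<omega> \<in> space ?P. \<exists>n. expl_stops N eta \<omega> n \<and> (\<forall>m<n. \<not> expl_stops N eta \<omega> m) \<and> fst (\<omega> n) = i}
      = to_stream -` attach_event {i} z0 \<inter> space ?P"
    unfolding stops by (auto simp: attach_event_def first_stop_def space_stream_space)
  moreover have "measure paths (attach_event {i} z0) = measure ?P (to_stream -` attach_event {i} z0 \<inter> space ?P)"
    unfolding P by (subst stream_space_eq_distr) (rule measure_distr[OF measurable_to_stream attach_event_sets])
  ultimately show ?thesis
    by (simp add: attach_prob_def)
qed

lemma attach_event_disjoint: "i \<noteq> j \<Longrightarrow> attach_event {i} z \<inter> attach_event {j} z = {}"
  unfolding attach_event_def using first_stop_unique by blast

lemma sum_attach_prob: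
  assumes "k \<le> N"
  shows "(\<Sum>i=1..k. attach_prob S N eta i) = (\<Sum>h=0..int hmax. visits h * n_ge {1..k} h) / N"
proof -
  interpret P: prob_space paths
    by (rule prob_space_paths)
  have "disjoint_family_on (\<lambda>i. attach_event {i} z0) {1..k}"
    using attach_event_disjoint by (auto simp: disjoint_family_on_def)
  then have "(\<Sum>i=1..k. measure paths (attach_event {i} z0)) = measure paths (\<Union>i\<in>{1..k}. attach_event {i} z0)"
    using attach_event_sets by (intro P.finite_measure_finite_Union[symmetric]) auto
  also have "(\<Union>i\<in>{1..k}. attach_event {i} z0) = attach_event {1..k} z0"
    unfolding attach_event_def by blast
  finally show ?thesis
    using attach_event_prob[of "{1..k}"] assms by (simp add: attach_prob_eq_attach_event)
qed

lemma n_ge_ratio_mono: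
  assumes ordered: "ordered_config N eta" and "k \<le> N" and "h' \<le> h"
  shows "n_ge {1..k} h' * n_ge {1..N} h \<le> n_ge {1..k} h * n_ge {1..N} h'"
proof -
  have split: "n_ge {1..N} x = n_ge {1..k} x + n_ge {Suc k..N} x" for x
  proof -
    have "{i \<in> {1..N}. x \<le> int (eta i)} = {i \<in> {1..k}. x \<le> int (eta i)} \<union> {i \<in> {Suc k..N}. x \<le> int (eta i)}"
      using \<open>k \<le> N\<close> by auto
    then show ?thesis
      unfolding n_ge_def by (simp add: card_Un_disjoint disjoint_iff)
  qed
  have "n_ge {1..k} h' \<le> card {1..k}"
    unfolding n_ge_def by (rule card_mono) auto
  then have low_le_k: "n_ge {1..k} h' \<le> k"
    by simp
  have high_mono: "n_ge {Suc k..N} h \<le> n_ge {Suc k..N} h'"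
    unfolding n_ge_def using \<open>h' \<le> h\<close> by (intro card_mono) auto
  text \<open>If some column beyond k reaches height h, then by monotonicity all of the first k columns do.\<close>
  have "n_ge {1..k} h = k" if "0 < n_ge {Suc k..N} h"
  proof -
    have "{i \<in> {Suc k..N}. h \<le> int (eta i)} \<noteq> {}"
      using that unfolding n_ge_def by (metis card.empty less_irrefl)
    then obtain j where j: "j \<in> {Suc k..N}" "h \<le> int (eta j)"
      by blast
    have "h \<le> int (eta i)" if "i \<in> {1..k}" for i
    proof -
      have "eta j \<le> eta i"
        using ordered[unfolded ordered_config_def, rule_format, of i j] that j(1) by simp
      with j(2) show ?thesis by linarith
    qed
    then have "{i \<in> {1..k}. h \<le> int (eta i)} = {1..k}"
      by blast
    then show ?thesis by (simp add: n_ge_def)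
  qed
  moreover have "n_ge {1..k} h' * n_ge {Suc k..N} h \<le> k * n_ge {Suc k..N} h'"
    using low_le_k high_mono by (rule mult_mono) simp_all
  ultimately show ?thesis
    unfolding split by (cases "n_ge {Suc k..N} h = 0") (simp_all add: algebra_simps)
qed

lemma sum_n_ge_eq:
  assumes "K \<subseteq> {1..N}"
  shows "(\<Sum>h=0..int hmax. real (n_ge K h)) = (\<Sum>i\<in>K. real (eta i) + 1)"
proof -
  have "(\<Sum>h=0..int hmax. n_ge K h) = (\<Sum>i\<in>K. eta i + 1)"
    unfolding n_ge_def using assms eta_le_hmax by (intro sum_card_ge_eq) (auto intro: finite_subset)
  then have "real (\<Sum>h=0..int hmax. n_ge K h) = real (\<Sum>i\<in>K. eta i + 1)"
    by (rule arg_cong)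
  then show ?thesis
    by (simp only: of_nat_sum of_nat_add of_nat_1)
qed

lemma sum_attach_prob_ge:
  assumes ordered: "ordered_config N eta" and "k \<le> N"
  shows "(\<Sum>i=1..k. (real (eta i) + 1) / (real (config_size N eta) + real N))
    \<le> (\<Sum>i=1..k. attach_prob S N eta i)"
proof -
  let ?H = "{0..int hmax}" and ?a = "\<lambda>h. real (n_ge {1..k} h)" and ?c = "\<lambda>h. real (n_ge {1..N} h)"
  let ?A = "\<Sum>i=1..k. real (eta i) + 1" and ?C = "real (config_size N eta) + real N"
    and ?P = "\<Sum>i=1..k. attach_prob S N eta i"
  have size_k: "(\<Sum>h\<in>?H. ?a h) = ?A"
    using sum_n_ge_eq[of "{1..k}"] \<open>k \<le> N\<close> by simp
  have size_N: "(\<Sum>h\<in>?H. ?c h) = ?C"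
    using sum_n_ge_eq[of "{1..N}"] by (simp add: config_size_def sum.distrib)
  have weighted_k: "(\<Sum>h\<in>?H. visits h * ?a h) = N * ?P"
    using sum_attach_prob[OF \<open>k \<le> N\<close>] N_pos by simp
  have "(\<Sum>h\<in>?H. ?a h) * (\<Sum>h\<in>?H. visits h * ?c h) \<le> (\<Sum>h\<in>?H. ?c h) * (\<Sum>h\<in>?H. visits h * ?a h)"
  proof (rule monotone_likelihood_ratio_sum_le)
    show "visits h' \<le> visits h" if "h \<in> ?H" "h' \<in> ?H" "h' \<le> h" for h h'
      using that by (intro visits_mono) auto
    show "?a h' * ?c h \<le> ?a h * ?c h'" if "h \<in> ?H" "h' \<in> ?H" "h' \<le> h" for h h'
      using n_ge_ratio_mono[OF ordered \<open>k \<le> N\<close> \<open>h' \<le> h\<close>] by (simp flip: of_nat_mult)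
  qed simp
  then have "?A * N \<le> (?C * ?P) * N"
    unfolding size_k size_N visits_total weighted_k by (simp only: ac_simps)
  then have "?A \<le> ?C * ?P"
    by (rule mult_right_le_imp_le) (simp add: N_pos)
  moreover have "0 < ?C"
    using N_pos by simp
  ultimately show ?thesis
    unfolding sum_divide_distrib[symmetric] by (simp add: divide_le_eq mult.commute)
qed

end

lemma explorer_ballistic: "0 < N \<Longrightarrow> explorer N ballistic_step"
  by unfold_locales (simp_all add: ballistic_step_def)

lemma explorer_diffusive: "0 < N \<Longrightarrow> explorer N diffusive_step"
  by unfold_locales (simp_all add: diffusive_step_def)

theorem lemma3p7:
  fixes N :: nat and eta :: "nat \<Rightarrow> nat" and k :: nat
  assumes "N \<ge> 2"
    and "ordered_config N eta"
    and "1 \<le> k" and "k \<le> N"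
  shows "(\<Sum>i=1..k. pB N eta i) \<ge>
           (\<Sum>i=1..k. (real (eta i) + 1) / (real (config_size N eta) + real N))
       \<and> (\<Sum>i=1..k. pD N eta i) \<ge>
           (\<Sum>i=1..k. (real (eta i) + 1) / (real (config_size N eta) + real N))"
proof -
  have "0 < N" using assms(1) by simp
  then show ?thesis
    unfolding pB_def pD_def
    using explorer.sum_attach_prob_ge[OF explorer_ballistic assms(2,4)]
      explorer.sum_attach_prob_ge[OF explorer_diffusive assms(2,4)] by simp
qed

end
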